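(* Let $E$ be a Euclidean space and let $T:E\to E$ be $\alpha$-averaged for some $\alpha\in\,]0,1[$. Then $\operatorname{Fix}T=\emptyset$ if and only if $\|T^k(x)\|\to\infty$ as $k\to\infty$ for every $x\in E$.
   Context: $E$ is a finite-dimensional real inner product space with norm $\|\cdot\|$. $T:E\to E$ is $\alpha$-averaged ($\alpha\in]0,1[$) if $T=(1-\alpha)\operatorname{Id}+\alpha R$ for some $R:E\to E$ with $\|R(x)-R(y)\|\le\|x-y\|$ for all $x,y$. $\operatorname{Fix}T=\{x\in E:T(x)=x\}$ and $T^k$ is the $k$-fold composition. *)

theory Defs
  imports "HOL-Analysis.Analysis"
begin

definition nonexpansive :: "('a::real_normed_vector \<Rightarrow> 'a) \<Rightarrow> bool" where
  "nonexpansive R \<longleftrightarrow> (\<forall>x y. norm (R x - R y) \<le> norm (x - y))"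

definition averaged :: "real \<Rightarrow> ('a::real_normed_vector \<Rightarrow> 'a) \<Rightarrow> bool" where
  "averaged \<alpha> T \<longleftrightarrow> 0 < \<alpha> \<and> \<alpha> < 1 \<and>
     (\<exists>R. nonexpansive R \<and> (\<forall>x. T x = (1 - \<alpha>) *\<^sub>R x + \<alpha> *\<^sub>R R x))"

definition Fix :: "('a \<Rightarrow> 'a) \<Rightarrow> 'a set" where
  "Fix T = {x. T x = x}"

end

theory Submission
  imports Defs
begin

text \<open>If the orbit of \<open>x\<close> does not escape to infinity, a subsequence \<open>(T ^^ q j) x\<close> converges
  to some \<open>z\<close>. The step lengths \<open>norm ((T ^^ k) x - (T ^^ Suc k) x)\<close> decrease to a limit \<open>L\<close>, so
  by continuity every step along the orbit of \<open>z\<close> has length exactly \<open>L\<close>. For an averaged map,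
  equality in the nonexpansiveness inequality forces \<open>T u - T w = u - w\<close> (strict convexity of the
  Euclidean norm), so the orbit of \<open>z\<close> is the arithmetic progression \<open>z + m (T z - z)\<close>. It stays
  within bounded distance of the points \<open>(T ^^ q j) x\<close>, hence \<open>T z = z\<close>.\<close>

lemma averaged_imp_nonexpansive:
  assumes "averaged \<alpha> T"
  shows "nonexpansive T"
  unfolding nonexpansive_def
proof (intro allI)
  fix x y
  obtain R where \<alpha>: "0 < \<alpha>" "\<alpha> < 1" and R: "nonexpansive R"
    and T: "\<And>x. T x = (1 - \<alpha>) *\<^sub>R x + \<alpha> *\<^sub>R R x"
    using assms unfolding averaged_def by blast
  have "T x - T y = (1 - \<alpha>) *\<^sub>R (x - y) + \<alpha> *\<^sub>R (R x - R y)"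
    by (simp add: T algebra_simps)
  also have "norm \<dots> \<le> (1 - \<alpha>) * norm (x - y) + \<alpha> * norm (R x - R y)"
    using \<alpha> by (smt (verit) norm_scaleR norm_triangle_ineq)
  also have "\<dots> \<le> (1 - \<alpha>) * norm (x - y) + \<alpha> * norm (x - y)"
    using R \<alpha> unfolding nonexpansive_def by (simp add: mult_left_mono)
  finally show "norm (T x - T y) \<le> norm (x - y)"
    by (simp add: algebra_simps)
qed

lemma averaged_diff_eq_if_norm_eq:
  fixes T :: "'a::real_inner \<Rightarrow> 'a"
  assumes "averaged \<alpha> T" and norm_eq: "norm (T x - T y) = norm (x - y)"
  shows "T x - T y = x - y"
proof -
  obtain R where \<alpha>: "0 < \<alpha>" "\<alpha> < 1" and R: "nonexpansive R"
    and T: "\<And>x. T x = (1 - \<alpha>) *\<^sub>R x + \<alpha> *\<^sub>R R x"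
    using assms unfolding averaged_def by blast
  define u where "u = x - y"
  define w where "w = R x - R y"
  have Tu: "T x - T y = (1 - \<alpha>) *\<^sub>R u + \<alpha> *\<^sub>R w"
    by (simp add: T algebra_simps u_def w_def)
  have "(norm ((1 - \<alpha>) *\<^sub>R u + \<alpha> *\<^sub>R w))\<^sup>2 =
      (1 - \<alpha>) * (norm u)\<^sup>2 + \<alpha> * (norm w)\<^sup>2 - \<alpha> * (1 - \<alpha>) * (norm (u - w))\<^sup>2"
    by (simp add: power2_norm_eq_inner inner_add_left inner_add_right inner_diff_left
        inner_diff_right inner_commute algebra_simps)
  then have norm_u: "(norm u)\<^sup>2 =
      (1 - \<alpha>) * (norm u)\<^sup>2 + \<alpha> * (norm w)\<^sup>2 - \<alpha> * (1 - \<alpha>) * (norm (u - w))\<^sup>2"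
    using norm_eq Tu u_def by simp
  have "norm w \<le> norm u"
    using R unfolding nonexpansive_def u_def w_def by blast
  then have "\<alpha> * (norm w)\<^sup>2 \<le> \<alpha> * (norm u)\<^sup>2"
    using \<alpha> by (simp add: mult_left_mono power_mono)
  with norm_u have "(\<alpha> * (1 - \<alpha>)) * (norm (u - w))\<^sup>2 \<le> 0"
    by (simp add: algebra_simps)
  moreover have "\<alpha> * (1 - \<alpha>) > 0"
    using \<alpha> by simp
  ultimately have "(norm (u - w))\<^sup>2 \<le> 0"
    by (metis mult_le_cancel_left_pos mult_zero_right)
  then have "u = w"
    by simp
  then show ?thesis
    using Tu u_def by (simp add: algebra_simps)
qed

lemma nonexpansive_funpow:
  assumes "nonexpansive R"
  shows "nonexpansive (R ^^ n)"
proof (induction n)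
  case 0
  then show ?case by (simp add: nonexpansive_def)
next
  case (Suc n)
  then show ?case
    using assms order_trans unfolding nonexpansive_def by fastforce
qed

lemma nonexpansive_imp_isCont:
  assumes "nonexpansive R"
  shows "isCont R x"
proof -
  have "continuous_on UNIV R"
    by (rule lipschitz_on_continuous_on[of 1])
      (use assms in \<open>simp add: lipschitz_on_def dist_norm nonexpansive_def\<close>)
  then show ?thesis
    by (simp add: continuous_on_eq_continuous_at)
qed

lemma averaged_orbit_arithmetic_if_steps_const:
  fixes T :: "'a::real_inner \<Rightarrow> 'a"
  assumes "averaged \<alpha> T"
    and steps: "\<And>m. norm ((T ^^ m) z - (T ^^ Suc m) z) = L"
  shows "(T ^^ m) z = z + real m *\<^sub>R (T z - z)"
proof -
  have step: "(T ^^ Suc m) z - (T ^^ m) z = T z - z" for m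
  proof (induction m)
    case 0
    then show ?case by simp
  next
    case (Suc m)
    have "norm (T ((T ^^ m) z) - T ((T ^^ Suc m) z)) = norm ((T ^^ m) z - (T ^^ Suc m) z)"
      using steps[of m] steps[of "Suc m"] by simp
    then have "T ((T ^^ m) z) - T ((T ^^ Suc m) z) = (T ^^ m) z - (T ^^ Suc m) z"
      by (rule averaged_diff_eq_if_norm_eq[OF assms(1)])
    then have "(T ^^ Suc (Suc m)) z - (T ^^ Suc m) z = (T ^^ Suc m) z - (T ^^ m) z"
      by (simp add: algebra_simps)
    with Suc show ?case
      by simp
  qed
  show ?thesis
  proof (induction m)
    case 0
    then show ?case by simp
  next
    case (Suc m)
    have "(T ^^ Suc m) z = (T ^^ m) z + (T z - z)"
      using step[of m] by (metis diff_add_cancel add.commute)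
    also have "\<dots> = z + real (Suc m) *\<^sub>R (T z - z)"
      using Suc.IH by (simp add: algebra_simps)
    finally show ?case .
  qed
qed

lemma nonexpansive_orbit_cluster_point_steps_const:
  assumes nonexp: "nonexpansive T" and q: "strict_mono q"
    and lim: "(\<lambda>j. (T ^^ q j) x) \<longlonglongrightarrow> z"
  obtains L where "\<And>m. norm ((T ^^ m) z - (T ^^ Suc m) z) = L"
proof -
  define d where "d k = norm ((T ^^ k) x - (T ^^ Suc k) x)" for k
  have "decseq d"
    using nonexp unfolding decseq_Suc_iff d_def nonexpansive_def by simp
  then obtain L where dL: "d \<longlonglongrightarrow> L"
    using decseq_convergent[of d 0] by (auto simp: d_def)
  have "norm ((T ^^ m) z - (T ^^ Suc m) z) = L" for m
  proof -
    have "strict_mono (\<lambda>j. q j + m)"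
      using q by (simp add: strict_mono_def)
    from LIMSEQ_subseq_LIMSEQ[OF dL this]
    have to_L: "(\<lambda>j. norm ((T ^^ m) ((T ^^ q j) x) - (T ^^ Suc m) ((T ^^ q j) x))) \<longlonglongrightarrow> L"
      by (simp add: o_def d_def funpow_add add.commute)
    have "(\<lambda>j. (T ^^ n) ((T ^^ q j) x)) \<longlonglongrightarrow> (T ^^ n) z" for n
      using nonexpansive_imp_isCont[OF nonexpansive_funpow[OF nonexp]] lim
      by (rule isCont_tendsto_compose)
    then have "(\<lambda>j. norm ((T ^^ m) ((T ^^ q j) x) - (T ^^ Suc m) ((T ^^ q j) x)))
        \<longlonglongrightarrow> norm ((T ^^ m) z - (T ^^ Suc m) z)"
      by (intro tendsto_norm tendsto_diff)
    from this to_L show ?thesis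
      by (rule LIMSEQ_unique)
  qed
  then show thesis
    by (rule that)
qed

lemma averaged_orbit_cluster_point_fixed:
  fixes T :: "'a::real_inner \<Rightarrow> 'a"
  assumes "averaged \<alpha> T" and q: "strict_mono q"
    and lim: "(\<lambda>j. (T ^^ q j) x) \<longlonglongrightarrow> z"
  shows "T z = z"
proof (rule ccontr)
  assume "T z \<noteq> z"
  then have v: "norm (T z - z) > 0"
    by simp
  obtain B where B: "\<And>j. norm ((T ^^ q j) x - z) \<le> B"
    using convergent_imp_bounded[OF LIM_zero[OF lim]]
    by (auto simp: bounded_iff)
  obtain L where "\<And>m. norm ((T ^^ m) z - (T ^^ Suc m) z) = L"
    using nonexpansive_orbit_cluster_point_steps_const[OF averaged_imp_nonexpansive[OF assms(1)] q lim]
    by blast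
  from averaged_orbit_arithmetic_if_steps_const[OF assms(1) this]
  have orbit: "(T ^^ m) z - z = real m *\<^sub>R (T z - z)" for m
    by simp
  have bound: "real j * norm (T z - z) \<le> norm (x - z) + B" for j
  proof -
    have "real j * norm (T z - z) \<le> real (q j) * norm (T z - z)"
      using q by (simp add: mult_right_mono strict_mono_imp_increasing)
    also have "\<dots> = norm ((T ^^ q j) z - (T ^^ q j) x + ((T ^^ q j) x - z))"
      using orbit[of "q j"] by simp
    also have "\<dots> \<le> norm ((T ^^ q j) z - (T ^^ q j) x) + norm ((T ^^ q j) x - z)"
      by (rule norm_triangle_ineq)
    also have "\<dots> \<le> norm (x - z) + B"
    proof -
      have "norm ((T ^^ q j) z - (T ^^ q j) x) \<le> norm (z - x)"
        using nonexpansive_funpow[OF averaged_imp_nonexpansive[OF assms(1)], of "q j"]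
        unfolding nonexpansive_def by blast
      then show ?thesis
        using B[of j] by (simp add: norm_minus_commute)
    qed
    finally show ?thesis .
  qed
  obtain j :: nat where "(norm (x - z) + B) / norm (T z - z) < real j"
    using reals_Archimedean2 by blast
  then have "norm (x - z) + B < real j * norm (T z - z)"
    using v by (simp add: pos_divide_less_eq)
  with bound[of j] show False
    by simp
qed

lemma convergent_subseq_if_norm_not_tendsto_at_top:
  fixes X :: "nat \<Rightarrow> 'a::{real_normed_vector,heine_borel}"
  assumes "\<not> filterlim (\<lambda>k. norm (X k)) at_top sequentially"
  obtains q z where "strict_mono q" and "(\<lambda>j. X (q j)) \<longlonglongrightarrow> z"
proof -
  obtain Z where "\<not> eventually (\<lambda>k. Z \<le> norm (X k)) sequentially"
    using assms unfolding filterlim_at_top by blast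
  then have "infinite {k. norm (X k) < Z}"
    by (simp add: infinite_nat_iff_unbounded_le eventually_sequentially not_le)
  then obtain s :: "nat \<Rightarrow> nat" where s: "strict_mono s" and "\<And>n. norm (X (s n)) < Z"
    using infinite_enumerate by blast
  then have "bounded (range (X \<circ> s))"
    unfolding bounded_iff by (auto intro: less_imp_le)
  then obtain z r where "strict_mono r" and "(X \<circ> s \<circ> r) \<longlonglongrightarrow> z"
    using bounded_imp_convergent_subsequence by blast
  with s show thesis
    using that[of "s \<circ> r" z] strict_mono_o[of s r] by (simp add: o_def)
qed

theorem mainTheorem4:
  fixes T :: "'a::euclidean_space \<Rightarrow> 'a" and \<alpha> :: real
  assumes "\<alpha> \<in> {0<..<1}" and "averaged \<alpha> T"
  shows "Fix T = {} \<longleftrightarrow>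
    (\<forall>x. filterlim (\<lambda>k. norm ((T ^^ k) x)) at_top sequentially)"
proof
  assume no_fix: "Fix T = {}"
  show "\<forall>x. filterlim (\<lambda>k. norm ((T ^^ k) x)) at_top sequentially"
  proof (rule allI, rule ccontr)
    fix x
    assume "\<not> filterlim (\<lambda>k. norm ((T ^^ k) x)) at_top sequentially"
    then obtain q z where "strict_mono q" and "(\<lambda>j. (T ^^ q j) x) \<longlonglongrightarrow> z"
      by (rule convergent_subseq_if_norm_not_tendsto_at_top)
    with assms(2) have "T z = z"
      by (rule averaged_orbit_cluster_point_fixed)
    with no_fix show False
      by (simp add: Fix_def)
  qed
next
  assume escape: "\<forall>x. filterlim (\<lambda>k. norm ((T ^^ k) x)) at_top sequentially"
  show "Fix T = {}"
  proof (rule ccontr)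
    assume "Fix T \<noteq> {}"
    then obtain p where "T p = p"
      by (auto simp: Fix_def)
    then have orbit: "(T ^^ k) p = p" for k
      by (induction k) simp_all
    have "filterlim (\<lambda>k::nat. norm p) at_top sequentially"
      using escape[rule_format, of p] by (simp add: orbit)
    then show False
      by (auto simp: filterlim_at_top dest: spec[of _ "norm p + 1"])
  qed
qed

end
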